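(* If $X$ is an uncountable, zero-dimensional, Borel subspace of a Polish space, then $\mathfrak{s}(X)=\mathfrak{s}(2^\omega)$.
   Context: For infinite sets $U, A$, say $U$ splits $A$ if both $A\cap U$ and $A\setminus U$ are infinite. For a topological space $X$, $\mathfrak{s}(X)$ is the smallest cardinality of a family $\mathcal{U}$ of open subsets of $X$ such that every infinite $A\subseteq X$ is split by some $U\in\mathcal{U}$. $2^\omega$ is the Cantor space. *)

theory Defs
  imports "HOL-Analysis.Analysis" "HOL-Library.Equipollence"
begin

definition splits :: "'a set \<Rightarrow> 'a set \<Rightarrow> bool" where
  "splits U A \<longleftrightarrow> infinite (A \<inter> U) \<and> infinite (A - U)"

definition splitting_family :: "'a topology \<Rightarrow> 'a set set \<Rightarrow> bool" where
  "splitting_family T \<U> \<longleftrightarrow>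
     (\<forall>U\<in>\<U>. openin T U) \<and>
     (\<forall>A. A \<subseteq> topspace T \<and> infinite A \<longrightarrow> (\<exists>U\<in>\<U>. splits U A))"

text \<open>s(T2) \<le> s(T1): every splitting family of T1 is at least as large as some
  splitting family of T2 (i.e. the minimal cardinality for T2 is at most that for T1).\<close>
definition split_num_le :: "'b topology \<Rightarrow> 'a topology \<Rightarrow> bool" where
  "split_num_le T2 T1 \<longleftrightarrow>
     (\<forall>\<U>. splitting_family T1 \<U> \<longrightarrow> (\<exists>\<V>. splitting_family T2 \<V> \<and> \<V> \<lesssim> \<U>))"

definition zero_dimensional :: "'a topology \<Rightarrow> bool" where
  "zero_dimensional T \<longleftrightarrow> neighbourhood_base_of (\<lambda>V. openin T V \<and> closedin T V) T"

definition cantor_space :: "(nat \<Rightarrow> bool) topology" where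
  "cantor_space = product_topology (\<lambda>_. discrete_topology UNIV) UNIV"

end

theory Submission
  imports Defs "HOL-Library.Sublist"
begin

text \<open>Both inequalities come from continuous injections, since splitting families pull back along
  them. A zero-dimensional second countable space embeds into the Cantor space through the indicator
  functions of countably many clopen sets separating its points. Conversely, a Borel subset of a
  Polish space is analytic, i.e. a continuous image \<open>g ` C\<close> of a closed subset \<open>C\<close> of the Baire
  space, and such a set, if uncountable, contains a continuous injective image of the Cantor space:
  discard the countably many values taken on cylinders with countable image; then every cylinder
  with uncountable image contains two subcylinders with uncountable and disjoint images, and
  following this binary splitting along the bits of a point of the Cantor space gives the embedding.\<close>

section \<open>Analytic sets\<close>

text \<open>Closedness and continuity in the Baire space \<open>nat \<Rightarrow> nat\<close>, with its product of discrete
  topologies, are phrased combinatorially through agreement on initial segments.\<close>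

definition agree :: "nat \<Rightarrow> (nat \<Rightarrow> 'b) \<Rightarrow> (nat \<Rightarrow> 'b) \<Rightarrow> bool" where
  "agree n s t \<longleftrightarrow> (\<forall>i<n. s i = t i)"

definition baire_closed :: "(nat \<Rightarrow> nat) set \<Rightarrow> bool" where
  "baire_closed C \<longleftrightarrow> (\<forall>s. (\<forall>n. \<exists>t\<in>C. agree n s t) \<longrightarrow> s \<in> C)"

definition baire_continuous_on :: "(nat \<Rightarrow> nat) set \<Rightarrow> ((nat \<Rightarrow> nat) \<Rightarrow> 'a::metric_space) \<Rightarrow> bool" where
  "baire_continuous_on C g \<longleftrightarrow> (\<forall>s\<in>C. \<forall>e>0. \<exists>n. \<forall>t\<in>C. agree n s t \<longrightarrow> dist (g t) (g s) < e)"

definition analytic :: "'a::metric_space set \<Rightarrow> bool" where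
  "analytic S \<longleftrightarrow> (\<exists>C g. baire_closed C \<and> baire_continuous_on C g \<and> S = g ` C)"

lemma agree_mono: "agree n s t \<Longrightarrow> m \<le> n \<Longrightarrow> agree m s t"
  by (auto simp: agree_def)

lemma agree_sym: "agree n s t \<Longrightarrow> agree n t s"
  by (auto simp: agree_def)

lemma agree_Suc: "agree (Suc n) s t \<longleftrightarrow> agree n s t \<and> s n = t n"
  by (auto simp: agree_def less_Suc_eq)

lemma agree_Suc_shift: "agree (Suc n) s t \<longleftrightarrow> s 0 = t 0 \<and> agree n (s \<circ> Suc) (t \<circ> Suc)"
  by (auto simp: agree_def less_Suc_eq_0_disj)

lemma baire_continuous_on_subset:
  "baire_continuous_on C g \<Longrightarrow> C' \<subseteq> C \<Longrightarrow> baire_continuous_on C' g"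
  unfolding baire_continuous_on_def by blast

lemma baire_closed_INT:
  assumes "\<And>k. baire_closed (C k)"
  shows "baire_closed (\<Inter>k. C k)"
  unfolding baire_closed_def
proof (intro allI impI)
  fix s assume "\<forall>n. \<exists>t\<in>(\<Inter>k. C k). agree n s t"
  then have "\<forall>n. \<exists>t\<in>C k. agree n s t" for k by blast
  then show "s \<in> (\<Inter>k. C k)" using assms unfolding baire_closed_def by blast
qed

lemma baire_closed_Int:
  assumes "baire_closed C" "baire_closed D"
  shows "baire_closed (C \<inter> D)"
  unfolding baire_closed_def
proof (intro allI impI)
  fix s assume "\<forall>n. \<exists>t\<in>C \<inter> D. agree n s t"
  then have "\<forall>n. \<exists>t\<in>C. agree n s t" "\<forall>n. \<exists>t\<in>D. agree n s t" by blast+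
  then show "s \<in> C \<inter> D" using assms unfolding baire_closed_def by blast
qed

lemma baire_closed_preimage_closed:
  assumes "baire_closed C" "baire_continuous_on C g" "closed F"
  shows "baire_closed {s\<in>C. g s \<in> F}"
  unfolding baire_closed_def
proof (intro allI impI)
  fix s assume approx: "\<forall>n. \<exists>t\<in>{s \<in> C. g s \<in> F}. agree n s t"
  then have "s \<in> C" using assms(1) unfolding baire_closed_def by blast
  have "g s \<in> closure F"
    unfolding closure_approachable
  proof (intro allI impI)
    fix e :: real assume "e > 0"
    then obtain n where "\<forall>t\<in>C. agree n s t \<longrightarrow> dist (g t) (g s) < e"
      using assms(2) \<open>s \<in> C\<close> unfolding baire_continuous_on_def by blast
    moreover obtain t where "t \<in> C" "g t \<in> F" "agree n s t" using approx by blast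
    ultimately show "\<exists>y\<in>F. dist y (g s) < e" by blast
  qed
  then show "s \<in> {s \<in> C. g s \<in> F}" using \<open>s \<in> C\<close> assms(3) by (simp add: closure_closed)
qed

lemma baire_closed_equalizer:
  assumes "baire_closed C" "baire_continuous_on C f" "baire_continuous_on C g"
  shows "baire_closed {s\<in>C. f s = g s}"
  unfolding baire_closed_def
proof (intro allI impI)
  fix s assume approx: "\<forall>n. \<exists>t\<in>{s \<in> C. f s = g s}. agree n s t"
  then have "s \<in> C" using assms(1) unfolding baire_closed_def by blast
  have close: "dist (f s) (g s) < 2 * e" if "e > 0" for e
  proof -
    obtain m where m: "\<forall>t\<in>C. agree m s t \<longrightarrow> dist (f t) (f s) < e"
      using assms(2) \<open>s \<in> C\<close> \<open>e > 0\<close> unfolding baire_continuous_on_def by blast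
    obtain n where n: "\<forall>t\<in>C. agree n s t \<longrightarrow> dist (g t) (g s) < e"
      using assms(3) \<open>s \<in> C\<close> \<open>e > 0\<close> unfolding baire_continuous_on_def by blast
    obtain t where "t \<in> C" "f t = g t" "agree (max m n) s t" using approx by blast
    then have "dist (f t) (f s) < e" "dist (f t) (g s) < e"
      using m n agree_mono[of "max m n" s t] by (metis max.cobounded1, metis max.cobounded2)
    then show ?thesis using dist_triangle3[of "f s" "g s" "f t"] by linarith
  qed
  have "f s = g s"
  proof (rule ccontr)
    assume "f s \<noteq> g s"
    then show False using close[of "dist (f s) (g s) / 2"] by simp
  qed
  then show "s \<in> {s \<in> C. f s = g s}" using \<open>s \<in> C\<close> by simp
qed

definition baire_uniformly_continuous :: "((nat \<Rightarrow> 'b) \<Rightarrow> (nat \<Rightarrow> 'c)) \<Rightarrow> bool" where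
  "baire_uniformly_continuous \<phi> \<longleftrightarrow> (\<forall>m. \<exists>n. \<forall>s t. agree n s t \<longrightarrow> agree m (\<phi> s) (\<phi> t))"

lemma baire_closed_vimage:
  assumes "baire_closed C" "baire_uniformly_continuous \<phi>"
  shows "baire_closed {s. \<phi> s \<in> C}"
  unfolding baire_closed_def
proof (intro allI impI)
  fix s assume approx: "\<forall>n. \<exists>t\<in>{s. \<phi> s \<in> C}. agree n s t"
  have "\<exists>t\<in>C. agree m (\<phi> s) t" for m
  proof -
    obtain n where "\<forall>s t. agree n s t \<longrightarrow> agree m (\<phi> s) (\<phi> t)"
      using assms(2) unfolding baire_uniformly_continuous_def by blast
    moreover obtain t where "\<phi> t \<in> C" "agree n s t" using approx by blast
    ultimately show ?thesis by blast
  qed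
  then show "s \<in> {s. \<phi> s \<in> C}" using assms(1) unfolding baire_closed_def by blast
qed

lemma baire_continuous_on_compose:
  assumes "baire_continuous_on C g" "baire_uniformly_continuous \<phi>"
  shows "baire_continuous_on {s. \<phi> s \<in> C} (g \<circ> \<phi>)"
  unfolding baire_continuous_on_def
proof (intro ballI allI impI)
  fix s and e :: real assume "s \<in> {s. \<phi> s \<in> C}" "e > 0"
  then obtain m where m: "\<forall>t\<in>C. agree m (\<phi> s) t \<longrightarrow> dist (g t) (g (\<phi> s)) < e"
    using assms(1) unfolding baire_continuous_on_def by blast
  obtain n where "\<forall>s t. agree n s t \<longrightarrow> agree m (\<phi> s) (\<phi> t)"
    using assms(2) unfolding baire_uniformly_continuous_def by blast
  with m show "\<exists>n. \<forall>t\<in>{s. \<phi> s \<in> C}. agree n s t \<longrightarrow> dist ((g \<circ> \<phi>) t) ((g \<circ> \<phi>) s) < e"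
    by auto
qed

definition seq_column :: "nat \<Rightarrow> (nat \<Rightarrow> 'b) \<Rightarrow> nat \<Rightarrow> 'b" where
  "seq_column k s = (\<lambda>n. s (prod_encode (k, n)))"

lemma baire_uniformly_continuous_seq_column: "baire_uniformly_continuous (seq_column k)"
  unfolding baire_uniformly_continuous_def
proof
  fix m
  have "agree m (seq_column k s) (seq_column k t)"
    if "agree (Suc (\<Sum>i<m. prod_encode (k, i))) s t" for s t
    unfolding agree_def seq_column_def
  proof (intro allI impI)
    fix i assume "i < m"
    then have "prod_encode (k, i) \<le> (\<Sum>i<m. prod_encode (k, i))" by (intro member_le_sum) auto
    then show "s (prod_encode (k, i)) = t (prod_encode (k, i))" using that unfolding agree_def by auto
  qed
  then show "\<exists>n. \<forall>s t. agree n s t \<longrightarrow> agree m (seq_column k s) (seq_column k t)" by blast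
qed

lemma seq_columns_surj: "\<exists>s. \<forall>k. seq_column k s = \<tau> k"
  by (rule exI[of _ "\<lambda>j. case_prod \<tau> (prod_decode j)"]) (simp add: seq_column_def fun_eq_iff)

lemma analytic_Int_closed:
  assumes "analytic S" "closed F"
  shows "analytic (S \<inter> F)"
proof -
  obtain C g where "baire_closed C" "baire_continuous_on C g" "S = g ` C"
    using assms(1) unfolding analytic_def by blast
  then have "baire_closed {s\<in>C. g s \<in> F}" "baire_continuous_on {s\<in>C. g s \<in> F} g"
      "S \<inter> F = g ` {s\<in>C. g s \<in> F}"
    by (auto intro: baire_closed_preimage_closed assms(2) elim: baire_continuous_on_subset)
  then show ?thesis unfolding analytic_def by blast
qed

lemma analytic_UN:
  fixes S :: "nat \<Rightarrow> 'a::metric_space set"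
  assumes "\<And>k. analytic (S k)"
  shows "analytic (\<Union>k. S k)"
proof -
  obtain C :: "nat \<Rightarrow> (nat \<Rightarrow> nat) set" and g
    where C: "\<And>k. baire_closed (C k)" and g: "\<And>k. baire_continuous_on (C k) (g k)"
    and S: "\<And>k. S k = g k ` C k"
    using assms unfolding analytic_def by metis
  define C' where "C' = {s. s \<circ> Suc \<in> C (s 0)}"
  define g' where "g' s = g (s 0) (s \<circ> Suc)" for s
  have "baire_closed C'"
    unfolding baire_closed_def
  proof (intro allI impI)
    fix s assume approx: "\<forall>n. \<exists>t\<in>C'. agree n s t"
    have "\<exists>t\<in>C (s 0). agree n (s \<circ> Suc) t" for n
      using approx[rule_format, of "Suc n"] unfolding C'_def agree_Suc_shift by fastforce
    then show "s \<in> C'" using C[of "s 0"] unfolding baire_closed_def C'_def by blast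
  qed
  moreover have "baire_continuous_on C' g'"
    unfolding baire_continuous_on_def
  proof (intro ballI allI impI)
    fix s and e :: real assume "s \<in> C'" "e > 0"
    then obtain n where n: "\<forall>t\<in>C (s 0). agree n (s \<circ> Suc) t \<longrightarrow> dist (g (s 0) t) (g (s 0) (s \<circ> Suc)) < e"
      using g[of "s 0"] unfolding baire_continuous_on_def C'_def by blast
    have "dist (g' t) (g' s) < e" if "t \<in> C'" "agree (Suc n) s t" for t
      using that n unfolding C'_def g'_def agree_Suc_shift by auto
    then show "\<exists>n. \<forall>t\<in>C'. agree n s t \<longrightarrow> dist (g' t) (g' s) < e" by blast
  qed
  moreover have "(\<Union>k. S k) = g' ` C'"
  proof
    show "(\<Union>k. S k) \<subseteq> g' ` C'"
    proof
      fix y assume "y \<in> (\<Union>k. S k)"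
      then obtain k x where "x \<in> C k" "y = g k x" using S by blast
      moreover have "case_nat k x \<circ> Suc = x" by (simp add: fun_eq_iff)
      ultimately have "case_nat k x \<in> C'" "y = g' (case_nat k x)" unfolding C'_def g'_def by auto
      then show "y \<in> g' ` C'" by blast
    qed
    show "g' ` C' \<subseteq> (\<Union>k. S k)" unfolding C'_def g'_def using S by blast
  qed
  ultimately show ?thesis unfolding analytic_def by blast
qed

lemma analytic_INT:
  fixes S :: "nat \<Rightarrow> 'a::metric_space set"
  assumes "\<And>k. analytic (S k)"
  shows "analytic (\<Inter>k. S k)"
proof -
  obtain C :: "nat \<Rightarrow> (nat \<Rightarrow> nat) set" and g
    where C: "\<And>k. baire_closed (C k)" and g: "\<And>k. baire_continuous_on (C k) (g k)"
    and S: "\<And>k. S k = g k ` C k"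
    using assms unfolding analytic_def by metis
  \<comment> \<open>The columns of a sequence code one point of each piece, and all of them must have the same image.\<close>
  define D where "D k = {s. seq_column k s \<in> C k} \<inter> {s. seq_column 0 s \<in> C 0}" for k
  define C' where "C' = (\<Inter>k. {s\<in>D k. (g k \<circ> seq_column k) s = (g 0 \<circ> seq_column 0) s})"
  have "baire_continuous_on (D k) (g k \<circ> seq_column k)" "baire_continuous_on (D k) (g 0 \<circ> seq_column 0)" for k
    by (rule baire_continuous_on_subset
          [OF baire_continuous_on_compose[OF g baire_uniformly_continuous_seq_column]],
        auto simp: D_def)+
  moreover have "baire_closed (D k)" for k
    unfolding D_def
    by (intro baire_closed_Int baire_closed_vimage C baire_uniformly_continuous_seq_column)
  ultimately have "baire_closed C'"
    unfolding C'_def by (intro baire_closed_INT baire_closed_equalizer)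
  moreover have "baire_continuous_on C' (g 0 \<circ> seq_column 0)"
    using baire_continuous_on_compose[OF g baire_uniformly_continuous_seq_column, of 0]
    by (rule baire_continuous_on_subset) (auto simp: C'_def D_def)
  moreover have "(\<Inter>k. S k) = (g 0 \<circ> seq_column 0) ` C'"
  proof
    show "(\<Inter>k. S k) \<subseteq> (g 0 \<circ> seq_column 0) ` C'"
    proof
      fix y assume "y \<in> (\<Inter>k. S k)"
      then have "\<exists>x. x \<in> C k \<and> y = g k x" for k using S by blast
      then obtain \<tau> where \<tau>: "\<And>k. \<tau> k \<in> C k" "\<And>k. y = g k (\<tau> k)" by metis
      obtain s where "\<And>k. seq_column k s = \<tau> k" using seq_columns_surj by blast
      with \<tau> have "s \<in> C'" "y = (g 0 \<circ> seq_column 0) s" unfolding C'_def D_def by auto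
      then show "y \<in> (g 0 \<circ> seq_column 0) ` C'" by blast
    qed
    show "(g 0 \<circ> seq_column 0) ` C' \<subseteq> (\<Inter>k. S k)"
    proof
      fix y assume "y \<in> (g 0 \<circ> seq_column 0) ` C'"
      then obtain s where "s \<in> C'" "y = g 0 (seq_column 0 s)" by auto
      then have "seq_column k s \<in> C k \<and> y = g k (seq_column k s)" for k
        unfolding C'_def D_def by (auto dest: spec[of _ k])
      then show "y \<in> (\<Inter>k. S k)" unfolding S by blast
    qed
  qed
  ultimately show ?thesis unfolding analytic_def by blast
qed

lemma convergent_fast_Cauchy:
  fixes x :: "nat \<Rightarrow> 'a::complete_space"
  assumes fast: "\<And>m n. m \<le> n \<Longrightarrow> dist (x m) (x n) \<le> (1/2) ^ m"
  shows "convergent x" "dist (x m) (lim x) \<le> (1/2) ^ m"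
proof -
  have "Cauchy x"
  proof (rule metric_CauchyI)
    fix e :: real assume "e > 0"
    then obtain M where M: "(1/2::real) ^ M < e" using real_arch_pow_inv[of e "1/2"] by auto
    have "dist (x m) (x n) < e" if "M \<le> m" "M \<le> n" for m n
    proof -
      have "(1/2::real) ^ min m n \<le> (1/2) ^ M" using that by (intro power_decreasing) auto
      moreover have "dist (x m) (x n) \<le> (1/2) ^ min m n"
        using fast[of m n] fast[of n m] by (cases "m \<le> n") (simp_all add: dist_commute min_def)
      ultimately show ?thesis using M by linarith
    qed
    then show "\<exists>M. \<forall>m\<ge>M. \<forall>n\<ge>M. dist (x m) (x n) < e" by blast
  qed
  then show "convergent x" by (simp add: Cauchy_convergent_iff)
  then have "x \<longlonglongrightarrow> lim x" by (simp add: convergent_LIMSEQ_iff)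
  then have "(\<lambda>n. dist (x m) (x n)) \<longlonglongrightarrow> dist (x m) (lim x)" by (intro tendsto_intros)
  moreover have "eventually (\<lambda>n. dist (x m) (x n) \<le> (1/2) ^ m) sequentially"
    using fast by (auto intro: eventually_sequentiallyI[of m])
  ultimately show "dist (x m) (lim x) \<le> (1/2) ^ m" by (rule tendsto_upperbound) simp
qed

lemma dense_sequence:
  obtains d :: "nat \<Rightarrow> 'a::{metric_space, second_countable_topology}"
  where "\<And>x r. r > 0 \<Longrightarrow> \<exists>k. dist (d k) x < r"
proof -
  obtain D :: "'a set" where "countable D" and dense: "\<And>U. open U \<Longrightarrow> U \<noteq> {} \<Longrightarrow> \<exists>y\<in>D. y \<in> U"
    using countable_dense_exists by blast
  moreover have "D \<noteq> {}" using dense[of UNIV] by auto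
  ultimately have "\<exists>k. dist (from_nat_into D k) x < r" if "r > 0" for x r
    using dense[of "ball x r"] that
    by (metis centre_in_ball empty_iff from_nat_into_surj mem_ball dist_commute open_ball)
  then show ?thesis using that by blast
qed

lemma fast_Cauchy_approximation:
  fixes d :: "nat \<Rightarrow> 'a::metric_space"
  assumes dense: "\<And>x r. r > 0 \<Longrightarrow> \<exists>k. dist (d k) x < r"
  obtains s where "\<And>m n. m \<le> n \<Longrightarrow> dist (d (s m)) (d (s n)) \<le> (1/2) ^ m" "(\<lambda>n. d (s n)) \<longlonglongrightarrow> x"
proof -
  obtain s where s: "\<And>n. dist (d (s n)) x < (1/2) ^ Suc n"
    using dense[of "(1/2) ^ Suc _" x] by (metis zero_less_divide_1_iff zero_less_numeral zero_less_power)
  have "dist (d (s m)) (d (s n)) \<le> (1/2) ^ m" if "m \<le> n" for m n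
  proof -
    have "(1/2::real) ^ Suc n \<le> (1/2) ^ Suc m" using that by (intro power_decreasing) auto
    moreover have "(1/2::real) ^ Suc m + (1/2) ^ Suc m = (1/2) ^ m" by simp
    ultimately show ?thesis using dist_triangle2[of "d (s m)" "d (s n)" x] s[of m] s[of n] by linarith
  qed
  moreover have "(\<lambda>n. d (s n)) \<longlonglongrightarrow> x"
    unfolding lim_sequentially
  proof (intro allI impI)
    fix r :: real assume "r > 0"
    then obtain N where N: "(1/2::real) ^ N < r" using real_arch_pow_inv[of r "1/2"] by auto
    have "dist (d (s n)) x < r" if "n \<ge> N" for n
    proof -
      have "(1/2::real) ^ Suc n \<le> (1/2) ^ N" using that by (intro power_decreasing) auto
      then show ?thesis using s[of n] N by linarith
    qed
    then show "\<exists>N. \<forall>n\<ge>N. dist (d (s n)) x < r" by blast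
  qed
  ultimately show ?thesis using that by blast
qed

lemma analytic_UNIV: "analytic (UNIV :: 'a::polish_space set)"
proof -
  obtain d :: "nat \<Rightarrow> 'a" where dense: "\<And>x r. r > 0 \<Longrightarrow> \<exists>k. dist (d k) x < r"
    using dense_sequence by blast
  \<comment> \<open>A point is coded by the indices of a fast Cauchy sequence in the dense sequence converging to it.\<close>
  define C where "C = {s. \<forall>m n. m \<le> n \<longrightarrow> dist (d (s m)) (d (s n)) \<le> (1/2::real) ^ m}"
  define G where "G s = lim (\<lambda>n. d (s n))" for s
  have G_approx: "dist (d (s m)) (G s) \<le> (1/2) ^ m" if "s \<in> C" for s m
    using convergent_fast_Cauchy(2)[of "\<lambda>n. d (s n)"] that unfolding C_def G_def by blast
  have "baire_closed C"
    unfolding baire_closed_def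
  proof (intro allI impI)
    fix s assume approx: "\<forall>n. \<exists>t\<in>C. agree n s t"
    have "dist (d (s m)) (d (s n)) \<le> (1/2) ^ m" if "m \<le> n" for m n
    proof -
      obtain t where "t \<in> C" "agree (Suc n) s t" using approx by blast
      then show ?thesis using that unfolding C_def agree_def by auto
    qed
    then show "s \<in> C" unfolding C_def by blast
  qed
  moreover have "baire_continuous_on C G"
    unfolding baire_continuous_on_def
  proof (intro ballI allI impI)
    fix s and e :: real assume "s \<in> C" "e > 0"
    then obtain m where m: "(1/2::real) ^ m < e / 2" using real_arch_pow_inv[of "e/2" "1/2"] by auto
    have "dist (G t) (G s) < e" if "t \<in> C" "agree (Suc m) s t" for t
    proof -
      have "t m = s m" using that(2) by (simp add: agree_def)
      then have "dist (G t) (G s) \<le> dist (d (t m)) (G t) + dist (d (s m)) (G s)"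
        using dist_triangle3[of "G t" "G s" "d (s m)"] by simp
      then show ?thesis using G_approx[OF \<open>s \<in> C\<close>, of m] G_approx[OF that(1), of m] m by linarith
    qed
    then show "\<exists>n. \<forall>t\<in>C. agree n s t \<longrightarrow> dist (G t) (G s) < e" by blast
  qed
  moreover have "x \<in> G ` C" for x
  proof -
    obtain s where "\<And>m n. m \<le> n \<Longrightarrow> dist (d (s m)) (d (s n)) \<le> (1/2) ^ m" "(\<lambda>n. d (s n)) \<longlonglongrightarrow> x"
      using fast_Cauchy_approximation[OF dense] by blast
    then have "s \<in> C" "G s = x" unfolding C_def G_def by (auto intro: limI)
    then show ?thesis by blast
  qed
  ultimately show ?thesis unfolding analytic_def by blast
qed

lemma analytic_closed: "closed (F :: 'a::polish_space set) \<Longrightarrow> analytic F"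
  using analytic_Int_closed[OF analytic_UNIV] by fastforce

lemma analytic_open:
  assumes "open (U :: 'a::polish_space set)"
  shows "analytic U"
proof -
  have "fsigma_in euclidean U"
    using assms by (intro open_imp_fsigma_in metrizable_space_euclidean) simp
  then obtain F :: "nat \<Rightarrow> 'a set" where "\<And>n. closed (F n)" "(\<Union>n. F n) = U"
    unfolding fsigma_in_ascending by (metis closed_closedin)
  then show ?thesis using analytic_UN[of F] analytic_closed by metis
qed

lemma analytic_borel:
  assumes "A \<in> sets borel"
  shows "analytic (A :: 'a::polish_space set)"
proof -
  have "A \<in> sigma_sets UNIV (Collect open)" using assms by (simp add: sets_borel)
  then have "analytic A \<and> analytic (- A)"
  proof (induction rule: sigma_sets.induct)
    case (Basic a)
    then show ?case by (simp add: analytic_open analytic_closed closed_Compl)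
  next
    case Empty
    then show ?case by (simp add: analytic_open)
  next
    case (Compl a)
    then show ?case by (simp add: Compl_eq_Diff_UNIV[symmetric])
  next
    case (Union a)
    then show ?case by (simp add: analytic_UN analytic_INT)
  qed
  then show ?thesis ..
qed

section \<open>Uncountable analytic sets contain a copy of the Cantor space\<close>

definition cyl :: "'b list \<Rightarrow> (nat \<Rightarrow> 'b) set" where
  "cyl p = {s. \<forall>i<length p. s i = p ! i}"

definition seq_take :: "nat \<Rightarrow> (nat \<Rightarrow> 'b) \<Rightarrow> 'b list" where
  "seq_take n s = map s [0..<n]"

lemma length_seq_take [simp]: "length (seq_take n s) = n"
  by (simp add: seq_take_def)

lemma mem_cyl_seq_take: "t \<in> cyl (seq_take n s) \<longleftrightarrow> agree n s t"
  by (auto simp: cyl_def seq_take_def agree_def)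

lemma cyl_agree: "s \<in> cyl p \<Longrightarrow> t \<in> cyl p \<Longrightarrow> m \<le> length p \<Longrightarrow> agree m s t"
  by (auto simp: cyl_def agree_def)

lemma prefix_nth: "prefix p q \<Longrightarrow> i < length p \<Longrightarrow> q ! i = p ! i"
  by (auto simp: prefix_def nth_append)

lemma prefix_seq_take: "s \<in> cyl p \<Longrightarrow> length p \<le> n \<Longrightarrow> prefix p (seq_take n s)"
  by (auto simp: prefix_def cyl_def seq_take_def
      intro!: exI[of _ "map s [length p..<n]"] nth_equalityI)
    (auto simp: nth_append)

lemma agree_first_difference:
  assumes "x \<noteq> y"
  obtains n where "agree n x y" "x n \<noteq> y n"
proof -
  obtain n where "x n \<noteq> y n" "\<forall>m<n. x m = y m"
    using assms exists_least_iff[of "\<lambda>n. x n \<noteq> y n"] by (auto simp: fun_eq_iff)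
  then show ?thesis using that by (simp add: agree_def)
qed

primrec tree_path :: "('b list \<Rightarrow> 'b list \<times> 'b list) \<Rightarrow> (nat \<Rightarrow> bool) \<Rightarrow> nat \<Rightarrow> 'b list" where
  "tree_path children x 0 = []"
| "tree_path children x (Suc n) = (if x n then snd else fst) (children (tree_path children x n))"

lemma tree_path_agree: "agree n x y \<Longrightarrow> tree_path children x n = tree_path children y n"
  by (induction n) (simp_all add: agree_Suc)

lemma strict_prefix_chain_length:
  assumes step: "\<And>n. strict_prefix (L n) (L (Suc n))"
  shows "n \<le> length (L n)"
proof (induction n)
  case (Suc n)
  then show ?case using prefix_length_less[OF step[of n]] by simp
qed simp

lemma prefix_chain_limit:
  assumes step: "\<And>n. strict_prefix (L n) (L (Suc n))"
  shows "(\<lambda>i. L (Suc i) ! i) \<in> cyl (L n)"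
  unfolding cyl_def
proof (intro CollectI allI impI)
  have chain: "prefix (L m) (L n)" if "m \<le> n" for m n
    using that by (rule transitive_stepwise_le)
      (use step prefix_order.trans prefix_order.less_imp_le in blast)+
  fix i assume i: "i < length (L n)"
  have "Suc i \<le> length (L (Suc i))" by (rule strict_prefix_chain_length) (rule step)
  then have "i < length (L (Suc i))" by simp
  then show "L (Suc i) ! i = L n ! i"
    using chain[of "Suc i" n] chain[of n "Suc i"] i by (cases "Suc i \<le> n") (simp_all add: prefix_nth)
qed

text \<open>Following the bits of x from the root, T x n is the node reached after n choices between two
  children, and \<sigma> x is the branch through all of these nodes.\<close>

lemma binary_splitting_tree:
  fixes good :: "'b list \<Rightarrow> bool"
  assumes "good []"
    and split: "\<And>p. good p \<Longrightarrow>
      \<exists>q0 q1. good q0 \<and> good q1 \<and> strict_prefix p q0 \<and> strict_prefix p q1 \<and> R q0 q1"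
  obtains T :: "(nat \<Rightarrow> bool) \<Rightarrow> nat \<Rightarrow> 'b list" and \<sigma> :: "(nat \<Rightarrow> bool) \<Rightarrow> nat \<Rightarrow> 'b"
  where "\<And>x n. good (T x n)" "\<And>x n. n \<le> length (T x n)" "\<And>x n. \<sigma> x \<in> cyl (T x n)"
    "\<And>x y n. agree n x y \<Longrightarrow> T x n = T y n"
    "\<And>x y n. agree n x y \<Longrightarrow> \<not> x n \<Longrightarrow> y n \<Longrightarrow> R (T x (Suc n)) (T y (Suc n))"
proof -
  define children where "children p = (SOME qq. good (fst qq) \<and> good (snd qq) \<and>
      strict_prefix p (fst qq) \<and> strict_prefix p (snd qq) \<and> R (fst qq) (snd qq))" for p
  have children: "good (fst (children p)) \<and> good (snd (children p)) \<and> strict_prefix p (fst (children p))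
      \<and> strict_prefix p (snd (children p)) \<and> R (fst (children p)) (snd (children p))" if "good p" for p
    unfolding children_def by (rule someI_ex) (use split[OF that] in force)
  define T where "T = tree_path children"
  have good: "good (T x n)" for x n
    by (induction n) (simp_all add: T_def \<open>good []\<close> children)
  have step: "strict_prefix (T x n) (T x (Suc n))" for x n
    using children[OF good[of x n]] by (simp add: T_def)
  show ?thesis
  proof (rule that)
    show "good (T x n)" for x n by (rule good)
    show "n \<le> length (T x n)" for x n by (rule strict_prefix_chain_length) (rule step)
    show "(\<lambda>i. T x (Suc i) ! i) \<in> cyl (T x n)" for x n by (rule prefix_chain_limit) (rule step)
    show agree: "T x n = T y n" if "agree n x y" for x y n
      using that unfolding T_def by (rule tree_path_agree)
    show "R (T x (Suc n)) (T y (Suc n))" if "agree n x y" "\<not> x n" "y n" for x y n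
      using that children[OF good[of y n]] agree[OF that(1)] unfolding T_def by simp
  qed
qed

lemma uncountable_Un_countableD: "uncountable A \<Longrightarrow> A \<subseteq> B \<union> D \<Longrightarrow> countable D \<Longrightarrow> uncountable B"
  by (meson countable_Un countable_subset)

lemma condensation_kernel:
  fixes C :: "(nat \<Rightarrow> 'b::countable) set" and g :: "(nat \<Rightarrow> 'b) \<Rightarrow> 'a"
  obtains K where "K \<subseteq> C" "countable (g ` (C - K))"
    "\<And>s n. s \<in> K \<Longrightarrow> uncountable (g ` (K \<inter> cyl (seq_take n s)))"
proof
  define K where "K = {s\<in>C. \<forall>n. uncountable (g ` (C \<inter> cyl (seq_take n s)))}"
  show "K \<subseteq> C" unfolding K_def by blast
  have "g ` (C - K) \<subseteq> (\<Union>p\<in>{p. countable (g ` (C \<inter> cyl p))}. g ` (C \<inter> cyl p))"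
  proof
    fix y assume "y \<in> g ` (C - K)"
    then obtain s n where "s \<in> C" "y = g s" "countable (g ` (C \<inter> cyl (seq_take n s)))"
      unfolding K_def by blast
    moreover have "s \<in> cyl (seq_take n s)" by (simp add: mem_cyl_seq_take agree_def)
    ultimately show "y \<in> (\<Union>p\<in>{p. countable (g ` (C \<inter> cyl p))}. g ` (C \<inter> cyl p))" by blast
  qed
  then show countable: "countable (g ` (C - K))"
    by (rule countable_subset) (rule countable_UN[OF countableI_type], simp)
  fix s n assume "s \<in> K"
  then have "uncountable (g ` (C \<inter> cyl (seq_take n s)))" unfolding K_def by blast
  then show "uncountable (g ` (K \<inter> cyl (seq_take n s)))"
    by (rule uncountable_Un_countableD[OF _ _ countable]) blast
qed

lemma baire_continuous_shrink:
  assumes g: "baire_continuous_on C g" and "K \<subseteq> C"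
    and kernel: "\<And>s n. s \<in> K \<Longrightarrow> uncountable (g ` (K \<inter> cyl (seq_take n s)))"
    and s: "s \<in> K \<inter> cyl p" and "r > 0"
  obtains q where "strict_prefix p q" "uncountable (g ` (K \<inter> cyl q))" "g ` (C \<inter> cyl q) \<subseteq> ball (g s) r"
proof -
  have "s \<in> C" using s \<open>K \<subseteq> C\<close> by blast
  then obtain n where n: "\<forall>t\<in>C. agree n s t \<longrightarrow> dist (g t) (g s) < r"
    using g \<open>r > 0\<close> unfolding baire_continuous_on_def by blast
  define q where "q = seq_take (max n (Suc (length p))) s"
  have "prefix p q" unfolding q_def using s by (intro prefix_seq_take) auto
  moreover have "length p < length q" by (simp add: q_def)
  ultimately have "strict_prefix p q" by (auto simp: strict_prefix_def)
  moreover have "uncountable (g ` (K \<inter> cyl q))" unfolding q_def using s by (intro kernel) blast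
  moreover have "g ` (C \<inter> cyl q) \<subseteq> ball (g s) r"
  proof (rule image_subsetI)
    fix t assume t: "t \<in> C \<inter> cyl q"
    then have "agree (max n (Suc (length p))) s t" by (simp add: q_def mem_cyl_seq_take)
    then have "agree n s t" by (rule agree_mono) simp
    with t n have "dist (g t) (g s) < r" by blast
    then show "g t \<in> ball (g s) r" by (simp add: dist_commute)
  qed
  ultimately show ?thesis by (rule that)
qed

lemma uncountable_image_two_points:
  assumes "uncountable (g ` A)"
  obtains a b where "a \<in> A" "b \<in> A" "g a \<noteq> g b"
proof -
  obtain a where "a \<in> A" using assms by (metis countable_empty equals0I image_empty)
  moreover have "\<not> g ` A \<subseteq> {g a}" using assms countable_subset[of _ "{g a}"] by auto
  then obtain b where "b \<in> A" "g b \<noteq> g a" by (auto simp: image_subset_iff)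
  ultimately show ?thesis by (metis that)
qed

lemma baire_continuous_splitting:
  assumes g: "baire_continuous_on C g" and "K \<subseteq> C"
    and kernel: "\<And>s n. s \<in> K \<Longrightarrow> uncountable (g ` (K \<inter> cyl (seq_take n s)))"
    and "uncountable (g ` (K \<inter> cyl p))"
  shows "\<exists>q0 q1. uncountable (g ` (K \<inter> cyl q0)) \<and> uncountable (g ` (K \<inter> cyl q1)) \<and>
    strict_prefix p q0 \<and> strict_prefix p q1 \<and> disjnt (g ` (C \<inter> cyl q0)) (g ` (C \<inter> cyl q1))"
proof -
  obtain s0 s1 where s: "s0 \<in> K \<inter> cyl p" "s1 \<in> K \<inter> cyl p" "g s0 \<noteq> g s1"
    using uncountable_image_two_points[OF \<open>uncountable (g ` (K \<inter> cyl p))\<close>] .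
  define r where "r = dist (g s0) (g s1) / 2"
  have "r > 0" using s(3) by (simp add: r_def)
  obtain q0 where "strict_prefix p q0" "uncountable (g ` (K \<inter> cyl q0))"
      and q0: "g ` (C \<inter> cyl q0) \<subseteq> ball (g s0) r"
    using baire_continuous_shrink[OF g \<open>K \<subseteq> C\<close> kernel s(1) \<open>r > 0\<close>] .
  moreover obtain q1 where "strict_prefix p q1" "uncountable (g ` (K \<inter> cyl q1))"
      and q1: "g ` (C \<inter> cyl q1) \<subseteq> ball (g s1) r"
    using baire_continuous_shrink[OF g \<open>K \<subseteq> C\<close> kernel s(2) \<open>r > 0\<close>] .
  moreover have "disjnt (ball (g s0) r) (ball (g s1) r)"
    unfolding disjnt_def by (rule disjoint_ballI) (simp add: r_def)
  then have "disjnt (g ` (C \<inter> cyl q0)) (g ` (C \<inter> cyl q1))"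
    by (rule disjnt_subset1[OF disjnt_subset2[OF _ q1] q0])
  ultimately show ?thesis by blast
qed

lemma topspace_cantor_space [simp]: "topspace cantor_space = UNIV"
  by (simp add: cantor_space_def topspace_product_topology)

lemma openin_cantor_space_agree: "openin cantor_space {y. agree m x y}"
proof (induction m)
  case 0
  then show ?case using openin_topspace[of cantor_space] by (simp add: agree_def)
next
  case (Suc m)
  have "continuous_map cantor_space (discrete_topology UNIV) (\<lambda>y. y m)"
    unfolding cantor_space_def by (rule continuous_map_product_projection) simp
  then have "openin cantor_space {y. y m \<in> {x m}}"
    using openin_continuous_map_preimage[of cantor_space _ "\<lambda>y. y m" "{x m}"] by simp
  moreover have "{y. agree (Suc m) x y} = {y. agree m x y} \<inter> {y. y m \<in> {x m}}"
    by (auto simp: agree_Suc)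
  ultimately show ?case using Suc.IH by (simp add: openin_Int)
qed

lemma continuous_map_cantor_space_metric:
  fixes h :: "(nat \<Rightarrow> bool) \<Rightarrow> 'a::metric_space"
  assumes "\<And>x e. e > 0 \<Longrightarrow> \<exists>m. \<forall>y. agree m x y \<longrightarrow> dist (h y) (h x) < e"
  shows "continuous_map cantor_space euclidean h"
  unfolding continuous_map_def
proof (intro conjI allI impI)
  fix U :: "'a set" assume "openin euclidean U"
  show "openin cantor_space {x \<in> topspace cantor_space. h x \<in> U}"
  proof (subst openin_subopen, intro ballI)
    fix x assume "x \<in> {x \<in> topspace cantor_space. h x \<in> U}"
    then obtain e where "e > 0" "ball (h x) e \<subseteq> U"
      using \<open>openin euclidean U\<close> open_contains_ball by force
    moreover obtain m where m: "\<forall>y. agree m x y \<longrightarrow> dist (h y) (h x) < e" using assms \<open>e > 0\<close> by blast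
    ultimately have "h y \<in> U" if "agree m x y" for y
    proof -
      from m that have "dist (h y) (h x) < e" by blast
      then have "h y \<in> ball (h x) e" by (simp add: dist_commute)
      with \<open>ball (h x) e \<subseteq> U\<close> show ?thesis by blast
    qed
    moreover have "x \<in> {y. agree m x y}" by (simp add: agree_def)
    ultimately show "\<exists>T. openin cantor_space T \<and> x \<in> T \<and> T \<subseteq> {x \<in> topspace cantor_space. h x \<in> U}"
      using openin_cantor_space_agree[of m x] by (intro exI[of _ "{y. agree m x y}"]) auto
  qed
qed simp

lemma inj_cantor_first_difference:
  fixes h :: "(nat \<Rightarrow> bool) \<Rightarrow> 'a"
  assumes "\<And>x y n. agree n x y \<Longrightarrow> \<not> x n \<Longrightarrow> y n \<Longrightarrow> h x \<noteq> h y"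
  shows "inj h"
proof (rule injI)
  fix x y assume "h x = h y"
  show "x = y"
  proof (rule ccontr)
    assume "x \<noteq> y"
    then obtain n where n: "agree n x y" "x n \<noteq> y n" by (rule agree_first_difference)
    then show False
      using assms[OF n(1)] assms[OF agree_sym[OF n(1)]] \<open>h x = h y\<close> by (cases "x n") auto
  qed
qed

lemma baire_closed_branch:
  assumes "baire_closed C" and "\<And>n. C \<inter> cyl (L n) \<noteq> {}" "\<And>n. n \<le> length (L n)" "\<And>n. s \<in> cyl (L n)"
  shows "s \<in> C"
proof -
  have "\<exists>t\<in>C. agree n s t" for n
  proof -
    obtain t where "t \<in> C" "t \<in> cyl (L n)" using assms(2)[of n] by blast
    then show ?thesis using cyl_agree[OF assms(4)[of n]] assms(3)[of n] by blast
  qed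
  then show ?thesis using assms(1) unfolding baire_closed_def by blast
qed

lemma uncountable_analytic_splitting_scheme:
  fixes S :: "'a::metric_space set"
  assumes "analytic S" "uncountable S"
  obtains C g and T :: "(nat \<Rightarrow> bool) \<Rightarrow> nat \<Rightarrow> nat list" and \<sigma>
  where "baire_closed C" "baire_continuous_on C g" "S = g ` C"
    "\<And>x n. C \<inter> cyl (T x n) \<noteq> {}" "\<And>x n. n \<le> length (T x n)" "\<And>x n. \<sigma> x \<in> cyl (T x n)"
    "\<And>x y n. agree n x y \<Longrightarrow> T x n = T y n"
    "\<And>x y n. agree n x y \<Longrightarrow> \<not> x n \<Longrightarrow> y n \<Longrightarrow>
      disjnt (g ` (C \<inter> cyl (T x (Suc n)))) (g ` (C \<inter> cyl (T y (Suc n))))"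
proof -
  obtain C g where C: "baire_closed C" and g: "baire_continuous_on C g" and S: "S = g ` C"
    using assms(1) unfolding analytic_def by blast
  obtain K where "K \<subseteq> C" and countable: "countable (g ` (C - K))"
    and kernel: "\<And>s n. s \<in> K \<Longrightarrow> uncountable (g ` (K \<inter> cyl (seq_take n s)))"
    using condensation_kernel by blast
  have root: "uncountable (g ` (K \<inter> cyl []))"
    using assms(2) unfolding S by (rule uncountable_Un_countableD[OF _ _ countable]) (auto simp: cyl_def)
  have split: "\<And>p. uncountable (g ` (K \<inter> cyl p)) \<Longrightarrow> \<exists>q0 q1. uncountable (g ` (K \<inter> cyl q0)) \<and>
      uncountable (g ` (K \<inter> cyl q1)) \<and> strict_prefix p q0 \<and> strict_prefix p q1 \<and>
      disjnt (g ` (C \<inter> cyl q0)) (g ` (C \<inter> cyl q1))"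
    using g \<open>K \<subseteq> C\<close> kernel by (rule baire_continuous_splitting)
  obtain T \<sigma> where good: "\<And>x n. uncountable (g ` (K \<inter> cyl (T x n)))"
    and length: "\<And>x n. n \<le> length (T x n)" and \<sigma>: "\<And>x n. \<sigma> x \<in> cyl (T x n)"
    and T_agree: "\<And>x y n. agree n x y \<Longrightarrow> T x n = T y n"
    and disjoint: "\<And>x y n. agree n x y \<Longrightarrow> \<not> x n \<Longrightarrow> y n \<Longrightarrow>
      disjnt (g ` (C \<inter> cyl (T x (Suc n)))) (g ` (C \<inter> cyl (T y (Suc n))))"
    using binary_splitting_tree[where good = "\<lambda>p. uncountable (g ` (K \<inter> cyl p))"
          and R = "\<lambda>q0 q1. disjnt (g ` (C \<inter> cyl q0)) (g ` (C \<inter> cyl q1))",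
          OF root split] by blast
  have nonempty: "C \<inter> cyl (T x n) \<noteq> {}" for x n
  proof
    assume "C \<inter> cyl (T x n) = {}"
    then have "K \<inter> cyl (T x n) = {}" using \<open>K \<subseteq> C\<close> by blast
    then show False using good[of x n] by simp
  qed
  show ?thesis by (rule that[OF C g S nonempty length \<sigma> T_agree disjoint])
qed

theorem analytic_uncountable_contains_cantor_space:
  fixes S :: "'a::metric_space set"
  assumes "analytic S" "uncountable S"
  obtains h :: "(nat \<Rightarrow> bool) \<Rightarrow> 'a" where "inj h" "range h \<subseteq> S" "continuous_map cantor_space euclidean h"
proof -
  obtain C g and T :: "(nat \<Rightarrow> bool) \<Rightarrow> nat \<Rightarrow> nat list" and \<sigma>
    where C: "baire_closed C" and g: "baire_continuous_on C g" and S: "S = g ` C"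
      and nonempty: "\<And>x n. C \<inter> cyl (T x n) \<noteq> {}" and length: "\<And>x n. n \<le> length (T x n)"
      and \<sigma>: "\<And>x n. \<sigma> x \<in> cyl (T x n)" and T_agree: "\<And>x y n. agree n x y \<Longrightarrow> T x n = T y n"
      and disjoint: "\<And>x y n. agree n x y \<Longrightarrow> \<not> x n \<Longrightarrow> y n \<Longrightarrow>
        disjnt (g ` (C \<inter> cyl (T x (Suc n)))) (g ` (C \<inter> cyl (T y (Suc n))))"
    by (rule uncountable_analytic_splitting_scheme[OF assms]) (rule that)
  have \<sigma>_C: "\<sigma> x \<in> C" for x using baire_closed_branch[OF C nonempty length \<sigma>] .
  define h where "h = g \<circ> \<sigma>"
  have "inj h"
  proof (rule inj_cantor_first_difference)
    fix x y n assume "agree n x y" "\<not> x n" "y n"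
    moreover have "h z \<in> g ` (C \<inter> cyl (T z (Suc n)))" for z unfolding h_def using \<sigma>_C \<sigma> by auto
    ultimately show "h x \<noteq> h y" using disjoint by (metis disjnt_iff)
  qed
  moreover have "range h \<subseteq> S" unfolding h_def S using \<sigma>_C by auto
  moreover have "continuous_map cantor_space euclidean h"
  proof (rule continuous_map_cantor_space_metric)
    fix x and e :: real assume "e > 0"
    then obtain m where "\<forall>t\<in>C. agree m (\<sigma> x) t \<longrightarrow> dist (g t) (g (\<sigma> x)) < e"
      using g \<sigma>_C unfolding baire_continuous_on_def by blast
    moreover have "agree m (\<sigma> x) (\<sigma> y)" if "agree m x y" for y
      using cyl_agree[OF \<sigma>[of x m]] \<sigma>[of y m] length[of m x] T_agree[OF that] by simp
    ultimately show "\<exists>m. \<forall>y. agree m x y \<longrightarrow> dist (h y) (h x) < e"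
      unfolding h_def using \<sigma>_C by auto
  qed
  ultimately show ?thesis by (rule that)
qed

section \<open>Splitting numbers along continuous injections\<close>

lemma splits_vimage: "splits U (f ` A) \<Longrightarrow> splits (f -` U) A"
proof -
  have "f ` (A \<inter> f -` U) = f ` A \<inter> U" "f ` (A - f -` U) = f ` A - U" by auto
  then show "splits U (f ` A) \<Longrightarrow> splits (f -` U) A"
    unfolding splits_def by (metis finite_imageI)
qed

lemma split_num_le_continuous_injection:
  assumes f: "continuous_map S T f" and "inj_on f (topspace S)"
  shows "split_num_le S T"
  unfolding split_num_le_def
proof (intro allI impI)
  fix \<U> assume \<U>: "splitting_family T \<U>"
  define \<V> where "\<V> = (\<lambda>U. {x \<in> topspace S. f x \<in> U}) ` \<U>"
  have "\<V> \<lesssim> \<U>" unfolding \<V>_def by (rule image_lepoll)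
  moreover have "splitting_family S \<V>"
    unfolding splitting_family_def
  proof (intro conjI ballI allI impI)
    fix V assume "V \<in> \<V>"
    then show "openin S V"
      using \<U> openin_continuous_map_preimage[OF f] unfolding \<V>_def splitting_family_def by blast
  next
    fix A assume A: "A \<subseteq> topspace S \<and> infinite A"
    then have "f ` A \<subseteq> topspace T" "infinite (f ` A)"
      using continuous_map_image_subset_topspace[OF f] \<open>inj_on f (topspace S)\<close>
      by (auto dest: finite_imageD inj_on_subset)
    then obtain U where "U \<in> \<U>" "splits (f -` U) A"
      using \<U> splits_vimage unfolding splitting_family_def by blast
    moreover have "A \<inter> f -` U = A \<inter> {x \<in> topspace S. f x \<in> U}"
      "A - f -` U = A - {x \<in> topspace S. f x \<in> U}"
      using A by auto
    ultimately show "\<exists>V\<in>\<V>. splits V A" unfolding \<V>_def splits_def by auto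
  qed
  ultimately show "\<exists>\<V>. splitting_family S \<V> \<and> \<V> \<lesssim> \<U>" by blast
qed

section \<open>Zero-dimensional spaces embed into the Cantor space\<close>

lemma continuous_map_clopen_indicator:
  assumes "openin T D" "closedin T D"
  shows "continuous_map T (discrete_topology UNIV) (\<lambda>x. x \<in> D)"
proof -
  have "openin T {x \<in> topspace T. (x \<in> D) \<in> B}" for B
  proof -
    have bool_mem: "(x \<in> D) \<in> B \<longleftrightarrow> (x \<in> D \<and> True \<in> B) \<or> (x \<notin> D \<and> False \<in> B)" for x
      by (cases "x \<in> D") auto
    have "{x \<in> topspace T. (x \<in> D) \<in> B} =
        (if True \<in> B then D else {}) \<union> (if False \<in> B then topspace T - D else {})"
      using openin_subset[OF assms(1)] by (auto simp: bool_mem)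
    then show ?thesis using assms by (auto intro: openin_diff)
  qed
  then show ?thesis by (auto simp: continuous_map_def)
qed

lemma zero_dimensional_clopen_between_basic:
  assumes "zero_dimensional (top_of_set X)" "topological_basis \<B>" "x \<in> X" "b \<in> \<B>" "x \<in> b"
  obtains b' V where "b' \<in> \<B>" "x \<in> b'" "openin (top_of_set X) V" "closedin (top_of_set X) V"
    "X \<inter> b' \<subseteq> V" "V \<subseteq> b"
proof -
  have "openin (top_of_set X) (X \<inter> b) \<and> x \<in> X \<inter> b"
    using topological_basis_open[OF assms(2,4)] assms(3,5) by (simp add: openin_open_Int)
  then have "\<exists>U V. openin (top_of_set X) U \<and> (openin (top_of_set X) V \<and> closedin (top_of_set X) V) \<and>
      x \<in> U \<and> U \<subseteq> V \<and> V \<subseteq> X \<inter> b"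
    using assms(1) unfolding zero_dimensional_def neighbourhood_base_of by (elim allE impE)
  then obtain U V where U: "openin (top_of_set X) U" "x \<in> U" "U \<subseteq> V"
    and V: "openin (top_of_set X) V" "closedin (top_of_set X) V" "V \<subseteq> X \<inter> b"
    by (elim exE conjE) (rule that)
  obtain G where "open G" "U = X \<inter> G" "x \<in> G" using U by (auto simp: openin_open)
  then obtain b' where "b' \<in> \<B>" "x \<in> b'" "b' \<subseteq> G"
    using topological_basisE[OF assms(2)] by blast
  moreover have "X \<inter> b' \<subseteq> V" using \<open>U = X \<inter> G\<close> \<open>U \<subseteq> V\<close> \<open>b' \<subseteq> G\<close> by blast
  ultimately show ?thesis using that V by blast
qed

lemma zero_dimensional_countable_separating_clopens:
  fixes X :: "'a::{second_countable_topology, t1_space} set"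
  assumes "zero_dimensional (top_of_set X)"
  obtains \<D> where "countable \<D>" "\<And>D. D \<in> \<D> \<Longrightarrow> openin (top_of_set X) D \<and> closedin (top_of_set X) D"
    "\<And>x y. x \<in> X \<Longrightarrow> y \<in> X \<Longrightarrow> x \<noteq> y \<Longrightarrow> \<exists>D\<in>\<D>. x \<in> D \<and> y \<notin> D"
proof -
  obtain \<B> :: "'a set set" where "countable \<B>" and \<B>: "topological_basis \<B>"
    using ex_countable_basis by blast
  define between where
    "between b' b D \<longleftrightarrow> openin (top_of_set X) D \<and> closedin (top_of_set X) D \<and> X \<inter> b' \<subseteq> D \<and> D \<subseteq> b"
    for b' b D
  define \<D> where "\<D> = (\<lambda>(b', b). SOME D. between b' b D) ` {(b', b) \<in> \<B> \<times> \<B>. \<exists>D. between b' b D}"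
  have "{(b', b) \<in> \<B> \<times> \<B>. \<exists>D. between b' b D} \<subseteq> \<B> \<times> \<B>" by blast
  then have "countable {(b', b) \<in> \<B> \<times> \<B>. \<exists>D. between b' b D}"
    by (rule countable_subset) (intro countable_SIGMA \<open>countable \<B>\<close>)
  then have countable: "countable \<D>"
    unfolding \<D>_def by (rule countable_image)
  have clopen: "openin (top_of_set X) D \<and> closedin (top_of_set X) D" if "D \<in> \<D>" for D
  proof -
    obtain b' b where "\<exists>D. between b' b D" "D = (SOME D. between b' b D)"
      using \<open>D \<in> \<D>\<close> unfolding \<D>_def by blast
    then show ?thesis using someI_ex[of "between b' b"] unfolding between_def by blast
  qed
  have separating: "\<exists>D\<in>\<D>. x \<in> D \<and> y \<notin> D" if "x \<in> X" "y \<in> X" "x \<noteq> y" for x y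
  proof -
    have "open (- {y})" "x \<in> - {y}" using \<open>x \<noteq> y\<close> by auto
    then obtain b where b: "b \<in> \<B>" "x \<in> b" "y \<notin> b"
      by (metis topological_basisE[OF \<B>] ComplD singletonI subsetD)
    then obtain b' V where "b' \<in> \<B>" "x \<in> b'" "between b' b V"
      using zero_dimensional_clopen_between_basic[OF assms \<B> \<open>x \<in> X\<close> b(1,2)]
      unfolding between_def by metis
    then have "between b' b (SOME D. between b' b D)" "(SOME D. between b' b D) \<in> \<D>"
      unfolding \<D>_def using b(1) by (auto intro: someI)
    then show ?thesis using b \<open>x \<in> b'\<close> \<open>x \<in> X\<close> unfolding between_def by blast
  qed
  show ?thesis by (rule that[OF countable clopen separating])
qed

lemma zero_dimensional_embeds_in_cantor_space:
  fixes X :: "'a::{second_countable_topology, t1_space} set"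
  assumes "zero_dimensional (top_of_set X)"
  obtains e where "continuous_map (top_of_set X) cantor_space e" "inj_on e X"
proof -
  obtain \<D> where "countable \<D>"
    and clopen: "\<And>D. D \<in> \<D> \<Longrightarrow> openin (top_of_set X) D \<and> closedin (top_of_set X) D"
    and separating: "\<And>x y. x \<in> X \<Longrightarrow> y \<in> X \<Longrightarrow> x \<noteq> y \<Longrightarrow> \<exists>D\<in>\<D>. x \<in> D \<and> y \<notin> D"
    using zero_dimensional_countable_separating_clopens[OF assms] by blast
  \<comment> \<open>The empty set is added only to make the family nonempty, so that it can be enumerated.\<close>
  define D where "D = from_nat_into (insert {} \<D>)"
  have range_D: "range D = insert {} \<D>"
    unfolding D_def using \<open>countable \<D>\<close> by (simp add: range_from_nat_into)
  define e where "e x = (\<lambda>n. x \<in> D n)" for x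
  have "continuous_map (top_of_set X) cantor_space e"
    unfolding cantor_space_def continuous_map_componentwise_UNIV e_def
  proof
    fix n
    have "D n \<in> insert {} \<D>" using range_D by blast
    then show "continuous_map (top_of_set X) (discrete_topology UNIV) (\<lambda>x. x \<in> D n)"
      using clopen by (intro continuous_map_clopen_indicator) auto
  qed
  moreover have "inj_on e X"
  proof (rule inj_onI)
    fix x y assume "x \<in> X" "y \<in> X" "e x = e y"
    show "x = y"
    proof (rule ccontr)
      assume "x \<noteq> y"
      then obtain n where "x \<in> D n" "y \<notin> D n"
        using separating[OF \<open>x \<in> X\<close> \<open>y \<in> X\<close>] range_D by (metis insertCI rangeE)
      then show False using \<open>e x = e y\<close> unfolding e_def by metis
    qed
  qed
  ultimately show ?thesis by (rule that)
qed

theorem lemma2p3: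
  fixes X :: "'a::polish_space set"
  assumes "uncountable X"
    and "zero_dimensional (top_of_set X)"
    and "X \<in> sets borel"
  shows "split_num_le cantor_space (top_of_set X) \<and> split_num_le (top_of_set X) cantor_space"
proof
  obtain h :: "(nat \<Rightarrow> bool) \<Rightarrow> 'a"
    where "inj h" "range h \<subseteq> X" "continuous_map cantor_space euclidean h"
    by (rule analytic_uncountable_contains_cantor_space[OF analytic_borel[OF assms(3)] assms(1)])
  then show "split_num_le cantor_space (top_of_set X)"
    by (intro split_num_le_continuous_injection)
      (simp_all add: continuous_map_in_subtopology image_subset_iff_funcset)
next
  obtain e where "continuous_map (top_of_set X) cantor_space e" "inj_on e X"
    using zero_dimensional_embeds_in_cantor_space[OF assms(2)] .
  then show "split_num_le (top_of_set X) cantor_space"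
    by (intro split_num_le_continuous_injection) simp_all
qed

end
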